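(* Let $(X,f)$, $(Y,g)$ be dynamical systems, $\pi\colon(X,f)\to(Y,g)$ a factor map such that $\pi^{-1}(y)$ is at most countable for every $y\in Y$, and let $z_1,z_2\in X$ with $\pi(z_1)\ne\pi(z_2)$. Let $\varepsilon=d(\pi(z_1),\pi(z_2))/3$ and let $\delta>0$ be such that $d(a,b)<\delta$ implies $d(\pi(a),\pi(b))<\varepsilon$ for $a,b\in X$. Suppose $S\subset X$ is a dense Mycielski syndetically scrambled set for $f$ such that for any two distinct $x_1,x_2\in S$ there is an infinite set $M\subset\mathbb N$ with $d(z_i,f^n(x_i))<\delta$ for $i=1,2$ and all $n\in M$. Then $g$ has a dense Mycielski syndetically $\varepsilon$-scrambled set $T\subset\pi(S)$. Moreover, if $f^k(S)\subset S$ for some $k\in\mathbb N$, then $T$ may be chosen with $g^k(T)\subset T$.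
   Context: Dynamical system: compact metric space with continuous self-map. Factor map: continuous surjection $\pi$ with $\pi\circ f=g\circ\pi$. Syndetic: subset of $\mathbb N$ meeting every set with arbitrarily long runs of consecutive integers. $\mathrm{Asy}$ and $\mathrm{SProx}$: pairs with $d(f^nx,f^ny)\to0$, resp. with $\{n:d(f^nx,f^ny)<\eta\}$ syndetic for all $\eta>0$. A set with at least two points is syndetically scrambled if all distinct pairs lie in $\mathrm{SProx}\setminus\mathrm{Asy}$; syndetically $\varepsilon$-scrambled if moreover $\limsup_n d(g^nx,g^ny)\ge\varepsilon$ for all distinct pairs. Mycielski set: countable union of Cantor sets. *)

theory Defs
  imports "HOL-Analysis.Analysis"
begin

definition dyn_sys :: "('a::metric_space \<Rightarrow> 'a) \<Rightarrow> bool" where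
  "dyn_sys f \<longleftrightarrow> compact (UNIV :: 'a set) \<and> continuous_on UNIV f"

definition factor_map ::
  "('a::metric_space \<Rightarrow> 'a) \<Rightarrow> ('b::metric_space \<Rightarrow> 'b) \<Rightarrow> ('a \<Rightarrow> 'b) \<Rightarrow> bool" where
  "factor_map f g p \<longleftrightarrow> continuous_on UNIV p \<and> surj p \<and> p \<circ> f = g \<circ> p"

definition syndetic :: "nat set \<Rightarrow> bool" where
  "syndetic A \<longleftrightarrow> (\<forall>B. (\<forall>L. \<exists>m. {m..<m+L} \<subseteq> B) \<longrightarrow> A \<inter> B \<noteq> {})"

definition Asy :: "('a::metric_space \<Rightarrow> 'a) \<Rightarrow> ('a \<times> 'a) set" where
  "Asy f = {(x, y). (\<lambda>n. dist ((f ^^ n) x) ((f ^^ n) y)) \<longlonglongrightarrow> 0}"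

definition SProx :: "('a::metric_space \<Rightarrow> 'a) \<Rightarrow> ('a \<times> 'a) set" where
  "SProx f = {(x, y). \<forall>\<eta>>0. syndetic {n. dist ((f ^^ n) x) ((f ^^ n) y) < \<eta>}}"

definition synd_scrambled :: "('a::metric_space \<Rightarrow> 'a) \<Rightarrow> 'a set \<Rightarrow> bool" where
  "synd_scrambled f S \<longleftrightarrow> (\<exists>x\<in>S. \<exists>y\<in>S. x \<noteq> y) \<and>
     (\<forall>x\<in>S. \<forall>y\<in>S. x \<noteq> y \<longrightarrow> (x, y) \<in> SProx f - Asy f)"

definition synd_eps_scrambled :: "('a::metric_space \<Rightarrow> 'a) \<Rightarrow> real \<Rightarrow> 'a set \<Rightarrow> bool" where
  "synd_eps_scrambled f \<epsilon> S \<longleftrightarrow> synd_scrambled f S \<and>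
     (\<forall>x\<in>S. \<forall>y\<in>S. x \<noteq> y \<longrightarrow>
        limsup (\<lambda>n. ereal (dist ((f ^^ n) x) ((f ^^ n) y))) \<ge> ereal \<epsilon>)"

definition cantor_ternary :: "real set" where
  "cantor_ternary = {x. \<exists>a::nat \<Rightarrow> real. (\<forall>n. a n \<in> {0, 2}) \<and> x = (\<Sum>n. a n / 3 ^ (Suc n))}"

definition cantor_set :: "'a::metric_space set \<Rightarrow> bool" where
  "cantor_set C \<longleftrightarrow> C homeomorphic cantor_ternary"

definition mycielski :: "'a::metric_space set \<Rightarrow> bool" where
  "mycielski S \<longleftrightarrow> (\<exists>\<C>. countable \<C> \<and> (\<forall>C\<in>\<C>. cantor_set C) \<and> S = \<Union>\<C>)"

end

theory Submission imports Defs begin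

text \<open>The middle-thirds Cantor set is compact: it is the continuous image of the compact
  product space of digit sequences in {0,2}.\<close>
lemma compact_cantor_ternary: "compact cantor_ternary"
proof -
  define A where "A = PiE (UNIV::nat set) (\<lambda>_. {0::real,2})"
  define ternary_value where "ternary_value = (\<lambda>a::nat\<Rightarrow>real. \<Sum>n. a n / 3^Suc n)"
  have "compactin (product_topology (\<lambda>_. euclidean) UNIV) A"
    unfolding A_def by (subst compactin_PiE) auto
  then have compact_A: "compact A"
    by (simp add: euclidean_product_topology)
  have "(\<lambda>i::nat. 2 / 3 ^ Suc i :: real) = (\<lambda>i. (2/3) * (1/3::real)^i)"
    by (auto simp: power_one_over field_simps)
  then have majorant: "summable (\<lambda>i::nat. 2 / 3 ^ Suc i :: real)"
    by (simp add: summable_mult summable_geometric)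
  have "uniform_limit A (\<lambda>n a. \<Sum>i<n. a i / 3^Suc i) ternary_value sequentially"
    unfolding ternary_value_def
    by (rule Weierstrass_m_test[OF _ majorant])
       (auto simp: A_def PiE_def Pi_def intro!: divide_right_mono;
        metis abs_zero abs_numeral order_refl zero_le_numeral)
  then have "continuous_on A ternary_value"
    by (rule uniform_limit_theorem[rotated])
       (auto intro!: always_eventually continuous_intros
             continuous_on_subset[OF continuous_on_product_coordinates])
  moreover have "cantor_ternary = ternary_value ` A"
    unfolding cantor_ternary_def ternary_value_def A_def PiE_def Pi_def by auto
  ultimately show ?thesis
    using compact_A compact_continuous_image by metis
qed

text \<open>A continuous injective image of a Cantor set is a Cantor set (Cantor sets are compact,
  so the map is a homeomorphism onto its image).\<close>
lemma cantor_set_image: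
  fixes p :: "'a::metric_space \<Rightarrow> 'b::metric_space"
  assumes "cantor_set C" and "continuous_on C p" and "inj_on p C"
  shows "cantor_set (p ` C)"
proof -
  have C_homeo: "C homeomorphic cantor_ternary"
    using assms(1) unfolding cantor_set_def .
  then have "compact C"
    using homeomorphic_compactness compact_cantor_ternary by blast
  then have "C homeomorphic p ` C"
    using assms(2,3) by (intro homeomorphic_compact) simp_all
  then show ?thesis
    using C_homeo unfolding cantor_set_def by (meson homeomorphic_sym homeomorphic_trans)
qed

lemma mycielski_image:
  fixes p :: "'a::metric_space \<Rightarrow> 'b::metric_space"
  assumes "mycielski S" and "continuous_on UNIV p" and "inj_on p S"
  shows "mycielski (p ` S)"
proof -
  obtain \<C> where \<C>: "countable \<C>" "\<forall>C\<in>\<C>. cantor_set C" "S = \<Union>\<C>"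
    using assms(1) unfolding mycielski_def by blast
  have "cantor_set (p ` C)" if "C \<in> \<C>" for C
  proof (rule cantor_set_image)
    show "cantor_set C" using \<C>(2) that by blast
    show "continuous_on C p" using assms(2) by (rule continuous_on_subset) simp
    show "inj_on p C" using assms(3) \<C>(3) that by (meson Sup_upper inj_on_subset)
  qed
  then show ?thesis
    unfolding mycielski_def using \<C>(1,3) by (intro exI[of _ "(image p) ` \<C>"]) auto
qed

lemma iterate_semiconj:
  assumes "p \<circ> f = g \<circ> p"
  shows "(g ^^ n) (p x) = p ((f ^^ n) x)"
proof (induction n)
  case (Suc n)
  have "g (p y) = p (f y)" for y
    using assms by (metis comp_apply)
  with Suc show ?case by simp
qed simp

lemma syndetic_mono: "syndetic A \<Longrightarrow> A \<subseteq> B \<Longrightarrow> syndetic B"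
  unfolding syndetic_def by blast

lemma SProx_image:
  fixes p :: "'a::metric_space \<Rightarrow> 'b::metric_space"
  assumes "uniformly_continuous_on UNIV p" and "p \<circ> f = g \<circ> p"
    and "(x, y) \<in> SProx f"
  shows "(p x, p y) \<in> SProx g"
  unfolding SProx_def mem_Collect_eq case_prod_conv
proof (intro allI impI)
  fix \<eta> :: real assume "\<eta> > 0"
  then obtain d where d: "d > 0" "\<forall>a b. dist a b < d \<longrightarrow> dist (p a) (p b) < \<eta>"
    using assms(1) unfolding uniformly_continuous_on_def by (metis UNIV_I)
  have "syndetic {n. dist ((f ^^ n) x) ((f ^^ n) y) < d}"
    using assms(3) d(1) unfolding SProx_def by blast
  moreover have "{n. dist ((f ^^ n) x) ((f ^^ n) y) < d}
      \<subseteq> {n. dist ((g ^^ n) (p x)) ((g ^^ n) (p y)) < \<eta>}"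
    using d(2) by (auto simp: iterate_semiconj[OF assms(2)])
  ultimately show "syndetic {n. dist ((g ^^ n) (p x)) ((g ^^ n) (p y)) < \<eta>}"
    by (rule syndetic_mono)
qed

definition freq_separated :: "('a::metric_space \<Rightarrow> 'a) \<Rightarrow> real \<Rightarrow> 'a \<Rightarrow> 'a \<Rightarrow> bool" where
  "freq_separated g \<epsilon> u v \<longleftrightarrow>
     (\<exists>M. infinite M \<and> (\<forall>n\<in>M. \<epsilon> < dist ((g ^^ n) u) ((g ^^ n) v)))"

lemma limsup_ge_frequently:
  fixes X :: "nat \<Rightarrow> ereal"
  assumes "infinite M" and "\<forall>n\<in>M. c \<le> X n"
  shows "c \<le> limsup X"
  unfolding limsup_INF_SUP
proof (rule INF_greatest)
  fix n :: nat
  obtain m where "m \<ge> n" "m \<in> M"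
    using assms(1) infinite_nat_iff_unbounded_le by blast
  then show "c \<le> (SUP m\<in>{n..}. X m)"
    using assms(2) by (meson SUP_upper2 atLeast_iff)
qed

lemma freq_separated_limsup:
  assumes "freq_separated g \<epsilon> u v"
  shows "ereal \<epsilon> \<le> limsup (\<lambda>n. ereal (dist ((g ^^ n) u) ((g ^^ n) v)))"
  using assms unfolding freq_separated_def
  by (auto intro!: limsup_ge_frequently)

lemma freq_separated_not_Asy:
  assumes "freq_separated g \<epsilon> u v" and "\<epsilon> > 0"
  shows "(u, v) \<notin> Asy g"
proof
  assume "(u, v) \<in> Asy g"
  then have "eventually (\<lambda>n. dist ((g ^^ n) u) ((g ^^ n) v) < \<epsilon>) sequentially"
    using assms(2) order_tendstoD(2) unfolding Asy_def by fastforce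
  then obtain N where N: "\<forall>n\<ge>N. dist ((g ^^ n) u) ((g ^^ n) v) < \<epsilon>"
    unfolding eventually_sequentially by blast
  obtain M where M: "infinite M" "\<forall>n\<in>M. \<epsilon> < dist ((g ^^ n) u) ((g ^^ n) v)"
    using assms(1) unfolding freq_separated_def by blast
  obtain m where "m \<ge> N" "m \<in> M"
    using M(1) infinite_nat_iff_unbounded_le by blast
  then show False using N M(2) by fastforce
qed

lemma freq_separated_distinct:
  assumes "freq_separated g \<epsilon> u v" and "\<epsilon> > 0"
  shows "u \<noteq> v"
proof
  assume "u = v"
  obtain M where "infinite M" "\<forall>n\<in>M. \<epsilon> < dist ((g ^^ n) u) ((g ^^ n) v)"
    using assms(1) unfolding freq_separated_def by blast
  then obtain n where "\<epsilon> < dist ((g ^^ n) u) ((g ^^ n) v)"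
    by (metis ex_in_conv finite.emptyI)
  with \<open>u = v\<close> assms(2) show False by simp
qed

text \<open>The key separation estimate: points delta-close to z1 and z2 have images more than
  eps apart, since 3 eps = d(p z1, p z2) <= eps + d(p a, p b) + eps.\<close>
lemma image_separation:
  fixes p :: "'a::metric_space \<Rightarrow> 'b::metric_space"
  assumes "\<epsilon> = dist (p z1) (p z2) / 3"
    and "\<forall>a b. dist a b < \<delta> \<longrightarrow> dist (p a) (p b) < \<epsilon>"
    and "dist z1 a < \<delta>" and "dist z2 b < \<delta>"
  shows "\<epsilon> < dist (p a) (p b)"
proof -
  have "dist (p z1) (p a) < \<epsilon>" "dist (p z2) (p b) < \<epsilon>"
    using assms(2,3,4) by auto
  moreover have "dist (p z1) (p z2) \<le> dist (p z1) (p a) + dist (p a) (p b) + dist (p z2) (p b)"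
    by (metis add.commute add_le_cancel_left dist_commute dist_triangle dist_triangle_le)
  ultimately show ?thesis using assms(1) by linarith
qed

lemma freq_separated_from_visits:
  fixes p :: "'a::metric_space \<Rightarrow> 'b::metric_space"
  assumes "p \<circ> f = g \<circ> p"
    and "\<epsilon> = dist (p z1) (p z2) / 3"
    and "\<forall>a b. dist a b < \<delta> \<longrightarrow> dist (p a) (p b) < \<epsilon>"
    and "infinite M" and "\<forall>n\<in>M. dist z1 ((f ^^ n) x1) < \<delta> \<and> dist z2 ((f ^^ n) x2) < \<delta>"
  shows "freq_separated g \<epsilon> (p x1) (p x2)"
  unfolding freq_separated_def iterate_semiconj[OF assms(1)]
  using assms(2-5) image_separation[OF assms(2,3)] by blast

lemma inj_on_if_freq_separated:
  assumes "\<epsilon> > 0" and "\<forall>x1\<in>S. \<forall>x2\<in>S. x1 \<noteq> x2 \<longrightarrow> freq_separated g \<epsilon> (p x1) (p x2)"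
  shows "inj_on p S"
  using assms freq_separated_distinct by (metis inj_onI)

lemma synd_eps_scrambled_image:
  fixes p :: "'a::metric_space \<Rightarrow> 'b::metric_space"
  assumes "uniformly_continuous_on UNIV p" and "p \<circ> f = g \<circ> p"
    and "synd_scrambled f S" and "\<epsilon> > 0"
    and sep: "\<forall>x1\<in>S. \<forall>x2\<in>S. x1 \<noteq> x2 \<longrightarrow> freq_separated g \<epsilon> (p x1) (p x2)"
  shows "synd_eps_scrambled g \<epsilon> (p ` S)"
proof -
  have inj: "inj_on p S"
    using assms(4) sep by (rule inj_on_if_freq_separated)
  have pair: "(p x1, p x2) \<in> SProx g - Asy g \<and>
      ereal \<epsilon> \<le> limsup (\<lambda>n. ereal (dist ((g ^^ n) (p x1)) ((g ^^ n) (p x2))))"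
    if "x1 \<in> S" "x2 \<in> S" "x1 \<noteq> x2" for x1 x2
  proof -
    have "(x1, x2) \<in> SProx f"
      using assms(3) that unfolding synd_scrambled_def by blast
    then have "(p x1, p x2) \<in> SProx g"
      by (rule SProx_image[OF assms(1,2)])
    moreover have "freq_separated g \<epsilon> (p x1) (p x2)"
      using sep that by blast
    ultimately show ?thesis
      using freq_separated_not_Asy freq_separated_limsup assms(4) by blast
  qed
  obtain x y where "x \<in> S" "y \<in> S" "x \<noteq> y"
    using assms(3) unfolding synd_scrambled_def by blast
  then have "p x \<noteq> p y"
    using inj inj_on_contraD by metis
  with \<open>x \<in> S\<close> \<open>y \<in> S\<close> pair show ?thesis
    unfolding synd_eps_scrambled_def synd_scrambled_def by blast
qed

lemma dense_image:
  assumes "continuous_on UNIV p" and "surj p" and "closure S = UNIV"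
  shows "closure (p ` S) = UNIV"
proof -
  have "p ` closure S \<subseteq> closure (p ` S)"
    by (rule image_closure_subset[OF continuous_on_subset[OF assms(1)]])
       (simp_all add: closure_subset)
  then show ?thesis using assms(2,3) by auto
qed

lemma invariant_image:
  assumes "p \<circ> f = g \<circ> p" and "(f ^^ k) ` S \<subseteq> S"
  shows "(g ^^ k) ` p ` S \<subseteq> p ` S"
  using assms(2) by (auto simp: iterate_semiconj[OF assms(1)])

theorem proposition3p18:
  fixes f :: "'a::metric_space \<Rightarrow> 'a" and g :: "'b::metric_space \<Rightarrow> 'b"
    and p :: "'a \<Rightarrow> 'b" and z1 z2 :: 'a and \<epsilon> \<delta> :: real and S :: "'a set"
  assumes "dyn_sys f" and "dyn_sys g" and "factor_map f g p"
    and "\<forall>y. countable (p -` {y})"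
    and "p z1 \<noteq> p z2"
    and "\<epsilon> = dist (p z1) (p z2) / 3"
    and "\<delta> > 0" and "\<forall>a b. dist a b < \<delta> \<longrightarrow> dist (p a) (p b) < \<epsilon>"
    and "closure S = UNIV" and "mycielski S" and "synd_scrambled f S"
    and "\<forall>x1\<in>S. \<forall>x2\<in>S. x1 \<noteq> x2 \<longrightarrow>
           (\<exists>M::nat set. infinite M \<and>
              (\<forall>n\<in>M. dist z1 ((f ^^ n) x1) < \<delta> \<and> dist z2 ((f ^^ n) x2) < \<delta>))"
  shows "(\<exists>T. T \<subseteq> p ` S \<and> closure T = UNIV \<and> mycielski T \<and> synd_eps_scrambled g \<epsilon> T)
    \<and> (\<forall>k::nat. (f ^^ k) ` S \<subseteq> S \<longrightarrow>
         (\<exists>T. T \<subseteq> p ` S \<and> closure T = UNIV \<and> mycielski T \<and> synd_eps_scrambled g \<epsilon> T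
              \<and> (g ^^ k) ` T \<subseteq> T))"
proof -
  have p: "continuous_on UNIV p" "surj p" "p \<circ> f = g \<circ> p"
    using assms(3) unfolding factor_map_def by auto
  have p_uc: "uniformly_continuous_on UNIV p"
    using assms(1) p(1) unfolding dyn_sys_def by (simp add: compact_uniformly_continuous)
  have "dist (p z1) (p z2) > 0"
    using assms(5) by simp
  then have eps_pos: "\<epsilon> > 0"
    using assms(6) by linarith
  have sep: "\<forall>x1\<in>S. \<forall>x2\<in>S. x1 \<noteq> x2 \<longrightarrow> freq_separated g \<epsilon> (p x1) (p x2)"
  proof (intro ballI impI)
    fix x1 x2 assume "x1 \<in> S" "x2 \<in> S" "x1 \<noteq> x2"
    then obtain M where "infinite M"
      "\<forall>n\<in>M. dist z1 ((f ^^ n) x1) < \<delta> \<and> dist z2 ((f ^^ n) x2) < \<delta>"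
      using assms(12) by blast
    then show "freq_separated g \<epsilon> (p x1) (p x2)"
      by (rule freq_separated_from_visits[OF p(3) assms(6,8)])
  qed
  have "mycielski (p ` S)"
    using assms(10) p(1) inj_on_if_freq_separated[OF eps_pos sep] by (rule mycielski_image)
  moreover have "closure (p ` S) = UNIV"
    using p(1,2) assms(9) by (rule dense_image)
  moreover have "synd_eps_scrambled g \<epsilon> (p ` S)"
    using p_uc p(3) assms(11) eps_pos sep by (rule synd_eps_scrambled_image)
  ultimately have T: "p ` S \<subseteq> p ` S \<and> closure (p ` S) = UNIV \<and> mycielski (p ` S)
      \<and> synd_eps_scrambled g \<epsilon> (p ` S)"
    by simp
  show ?thesis
  proof (intro conjI allI impI)
    show "\<exists>T. T \<subseteq> p ` S \<and> closure T = UNIV \<and> mycielski T \<and> synd_eps_scrambled g \<epsilon> T"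
      using T by (rule exI)
    fix k :: nat assume "(f ^^ k) ` S \<subseteq> S"
    then have "(g ^^ k) ` p ` S \<subseteq> p ` S"
      using p(3) by (intro invariant_image)
    with T show "\<exists>T. T \<subseteq> p ` S \<and> closure T = UNIV \<and> mycielski T
        \<and> synd_eps_scrambled g \<epsilon> T \<and> (g ^^ k) ` T \<subseteq> T"
      by (intro exI[of _ "p ` S"]) simp
  qed
qed

end
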